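(* Let $f:G\to H$ be a group homomorphism with $H$ nontrivial. (1) If $H$ is torsion free, then $f$ is locally sectionable if and only if $f$ is surjective. (2) If $H$ is a torsion group, then $f$ is locally sectionable if and only if for each $b\in H$ there exists $a\in G$ with $f(a)=b$ and $o(a)=o(b)$.
   Context: $o(g)$ denotes the order of an element $g$. For a homomorphism $f:G\to H$ and a subgroup $L\le H$, a local section of $f$ on $L$ is a homomorphism $s:L\to G$ with $f\circ s=\mathrm{incl}_L$, where $\mathrm{incl}_L:L\hookrightarrow H$ is the inclusion. The homomorphism $f$ is called locally sectionable if for every $b\in H$ with $b\neq 1$ there is a subgroup $L\le H$ with $b\in L$ such that $f$ admits a local section on $L$. *)

theory Defs
  imports "HOL-Algebra.Algebra"
begin

definition local_section ::
  "('a, 'c) monoid_scheme \<Rightarrow> ('b, 'd) monoid_scheme \<Rightarrow> ('a \<Rightarrow> 'b) \<Rightarrow> 'b set \<Rightarrow> ('b \<Rightarrow> 'a) \<Rightarrow> bool"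
where
  "local_section G H f L s \<longleftrightarrow>
     subgroup L H \<and> s \<in> hom (H\<lparr>carrier := L\<rparr>) G \<and> (\<forall>x\<in>L. f (s x) = x)"

definition locally_sectionable ::
  "('a, 'c) monoid_scheme \<Rightarrow> ('b, 'd) monoid_scheme \<Rightarrow> ('a \<Rightarrow> 'b) \<Rightarrow> bool"
where
  "locally_sectionable G H f \<longleftrightarrow>
     (\<forall>b\<in>carrier H. b \<noteq> \<one>\<^bsub>H\<^esub> \<longrightarrow>
        (\<exists>L. subgroup L H \<and> b \<in> L \<and> (\<exists>s. local_section G H f L s)))"

definition torsion_free :: "('b, 'd) monoid_scheme \<Rightarrow> bool" where
  "torsion_free H \<longleftrightarrow>
     (\<forall>b\<in>carrier H. \<forall>n::nat. n > 0 \<longrightarrow> b [^]\<^bsub>H\<^esub> n = \<one>\<^bsub>H\<^esub> \<longrightarrow> b = \<one>\<^bsub>H\<^esub>)"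

definition torsion_group :: "('b, 'd) monoid_scheme \<Rightarrow> bool" where
  "torsion_group H \<longleftrightarrow>
     (\<forall>b\<in>carrier H. \<exists>n::nat. n > 0 \<and> b [^]\<^bsub>H\<^esub> n = \<one>\<^bsub>H\<^esub>)"

end

theory Submission imports Defs begin

text \<open>Homomorphisms can only shrink orders: ord (\<phi> x) divides ord x, where order 0 means
  infinite order. A local section s on a subgroup containing b therefore gives
  ord (s b) dvd ord b = ord (f (s b)) dvd ord (s b), so s b is a lift of b of the same order.
  Conversely, a lift a of b with ord a = ord b defines the section b^k \<mapsto> a^k on the cyclic
  subgroup generated by b. So f is locally sectionable iff every element of H has an
  order-preserving lift, whatever H is. In a torsion-free H every nontrivial element has
  infinite order, hence so does each of its lifts, which leaves only surjectivity.\<close>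

lemma (in group) ord_subgroup:
  assumes "subgroup L G"
  shows "group.ord (G\<lparr>carrier := L\<rparr>) x = ord x"
  unfolding group.ord_def[OF subgroup_imp_group[OF assms]] ord_def nat_pow_def by simp

lemma (in group) ord_eq_0_if_torsion_free:
  assumes "torsion_free G" and "x \<in> carrier G" and "x \<noteq> \<one>"
  shows "ord x = 0"
  using assms by (auto simp: torsion_free_def ord_eq_0)

lemma (in group_hom) ord_hom_dvd:
  assumes "x \<in> carrier G"
  shows "group.ord H (h x) dvd group.ord G x"
proof -
  have "h x [^]\<^bsub>H\<^esub> group.ord G x = \<one>\<^bsub>H\<^esub>"
    using assms by (simp flip: hom_nat_pow)
  then show ?thesis
    using assms by (simp add: H.pow_eq_id)
qed

lemma (in group_hom) local_section_ord:
  assumes sec: "local_section G H h L s" and b: "b \<in> L"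
  shows "s b \<in> carrier G" and "h (s b) = b" and "group.ord G (s b) = group.ord H b"
proof -
  have L: "subgroup L H" and hom_s: "s \<in> hom (H\<lparr>carrier := L\<rparr>) G"
    and lift: "h (s b) = b"
    using sec b by (auto simp: local_section_def)
  interpret s: group_hom "H\<lparr>carrier := L\<rparr>" G s
    using H.subgroup_imp_group[OF L] hom_s by (simp add: group_hom_def group_hom_axioms_def G.group_axioms)
  show sb: "s b \<in> carrier G"
    using b by simp
  show "h (s b) = b"
    by (fact lift)
  have "group.ord G (s b) dvd group.ord H b"
    using s.ord_hom_dvd b H.ord_subgroup[OF L] by simp
  moreover have "group.ord H b dvd group.ord G (s b)"
    using ord_hom_dvd[OF sb] lift by simp
  ultimately show "group.ord G (s b) = group.ord H b"
    by (rule dvd_antisym)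
qed

lemma (in group_hom) local_section_on_cyclic_subgroup:
  assumes a: "a \<in> carrier G" and ord_a: "group.ord G a = group.ord H (h a)"
  defines "s \<equiv> \<lambda>x. a [^]\<^bsub>G\<^esub> (SOME k::int. x = h a [^]\<^bsub>H\<^esub> k)"
  shows "local_section G H h (generate H {h a}) s"
proof -
  let ?b = "h a" and ?C = "generate H {h a}"
  have b: "?b \<in> carrier H"
    using a by simp
  have C: "?C = {?b [^]\<^bsub>H\<^esub> k | k::int. k \<in> UNIV}"
    using H.generate_pow[OF b] .
  have s_pow: "s (?b [^]\<^bsub>H\<^esub> k) = a [^]\<^bsub>G\<^esub> k" for k :: int
  proof -
    define j where "j = (SOME j::int. ?b [^]\<^bsub>H\<^esub> k = ?b [^]\<^bsub>H\<^esub> j)"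
    have "?b [^]\<^bsub>H\<^esub> k = ?b [^]\<^bsub>H\<^esub> j"
      unfolding j_def by (rule someI[of _ k]) simp
    then have "int (group.ord H ?b) dvd j - k"
      using H.int_pow_eq[OF b] by simp
    then have "a [^]\<^bsub>G\<^esub> k = a [^]\<^bsub>G\<^esub> j"
      using G.int_pow_eq[OF a] ord_a by simp
    then show ?thesis
      unfolding s_def j_def by simp
  qed
  have "s \<in> hom (H\<lparr>carrier := ?C\<rparr>) G"
  proof (rule homI)
    fix x assume "x \<in> carrier (H\<lparr>carrier := ?C\<rparr>)"
    then obtain k where "x = ?b [^]\<^bsub>H\<^esub> (k::int)"
      using C by auto
    then show "s x \<in> carrier G"
      using s_pow a by simp
  next
    fix x y assume "x \<in> carrier (H\<lparr>carrier := ?C\<rparr>)" "y \<in> carrier (H\<lparr>carrier := ?C\<rparr>)"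
    then obtain k j where "x = ?b [^]\<^bsub>H\<^esub> (k::int)" "y = ?b [^]\<^bsub>H\<^esub> (j::int)"
      using C by auto
    then show "s (x \<otimes>\<^bsub>H\<lparr>carrier := ?C\<rparr>\<^esub> y) = s x \<otimes>\<^bsub>G\<^esub> s y"
      using s_pow a b by (simp flip: H.int_pow_mult G.int_pow_mult)
  qed
  moreover have "h (s x) = x" if "x \<in> ?C" for x
    using that C s_pow a by (auto simp: hom_int_pow)
  ultimately show ?thesis
    using H.generate_is_subgroup b by (simp add: local_section_def)
qed

lemma (in group_hom) local_section_through_iff_order_preserving_lift:
  assumes b: "b \<in> carrier H"
  shows "(\<exists>L s. local_section G H h L s \<and> b \<in> L)
    \<longleftrightarrow> (\<exists>a\<in>carrier G. h a = b \<and> group.ord G a = group.ord H b)"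
proof
  assume "\<exists>L s. local_section G H h L s \<and> b \<in> L"
  then show "\<exists>a\<in>carrier G. h a = b \<and> group.ord G a = group.ord H b"
    using local_section_ord by blast
next
  assume "\<exists>a\<in>carrier G. h a = b \<and> group.ord G a = group.ord H b"
  then obtain a where "a \<in> carrier G" "h a = b" "group.ord G a = group.ord H (h a)"
    by auto
  moreover have "h a \<in> generate H {h a}"
    by (simp add: generate.incl)
  ultimately show "\<exists>L s. local_section G H h L s \<and> b \<in> L"
    using local_section_on_cyclic_subgroup by blast
qed

lemma (in group_hom) locally_sectionable_iff_order_preserving_lifts:
  "locally_sectionable G H h
    \<longleftrightarrow> (\<forall>b\<in>carrier H. \<exists>a\<in>carrier G. h a = b \<and> group.ord G a = group.ord H b)"
proof -
  have "locally_sectionable G H h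
    \<longleftrightarrow> (\<forall>b\<in>carrier H. b \<noteq> \<one>\<^bsub>H\<^esub> \<longrightarrow> (\<exists>L s. local_section G H h L s \<and> b \<in> L))"
    unfolding locally_sectionable_def local_section_def by blast
  also have "\<dots> \<longleftrightarrow> (\<forall>b\<in>carrier H. b \<noteq> \<one>\<^bsub>H\<^esub>
      \<longrightarrow> (\<exists>a\<in>carrier G. h a = b \<and> group.ord G a = group.ord H b))"
    using local_section_through_iff_order_preserving_lift by simp
  also have "\<dots> \<longleftrightarrow> (\<forall>b\<in>carrier H. \<exists>a\<in>carrier G. h a = b \<and> group.ord G a = group.ord H b)"
    using G.one_closed G.ord_id H.ord_id hom_one by metis
  finally show ?thesis .
qed

lemma (in group_hom) order_preserving_lifts_iff_surj_if_torsion_free: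
  assumes "torsion_free H"
  shows "(\<forall>b\<in>carrier H. \<exists>a\<in>carrier G. h a = b \<and> group.ord G a = group.ord H b)
    \<longleftrightarrow> h ` carrier G = carrier H"
proof
  assume "\<forall>b\<in>carrier H. \<exists>a\<in>carrier G. h a = b \<and> group.ord G a = group.ord H b"
  then show "h ` carrier G = carrier H"
    by force
next
  assume surj: "h ` carrier G = carrier H"
  show "\<forall>b\<in>carrier H. \<exists>a\<in>carrier G. h a = b \<and> group.ord G a = group.ord H b"
  proof
    fix b assume b: "b \<in> carrier H"
    show "\<exists>a\<in>carrier G. h a = b \<and> group.ord G a = group.ord H b"
    proof (cases "b = \<one>\<^bsub>H\<^esub>")
      case True
      then show ?thesis
        by (intro bexI[of _ "\<one>\<^bsub>G\<^esub>"]) simp_all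
    next
      case False
      obtain a where a: "a \<in> carrier G" "h a = b"
        using surj b by (metis imageE)
      have "group.ord H b = 0"
        using H.ord_eq_0_if_torsion_free[OF assms b False] .
      then have "group.ord G a = 0"
        using ord_hom_dvd[OF a(1)] a(2) by simp
      then show ?thesis
        using a \<open>group.ord H b = 0\<close> by (intro bexI[of _ a]) simp_all
    qed
  qed
qed

theorem lemma2p4:
  fixes G :: "('a, 'c) monoid_scheme" and H :: "('b, 'd) monoid_scheme" and f :: "'a \<Rightarrow> 'b"
  assumes "group G" and "group H" and "f \<in> hom G H"
    and "carrier H \<noteq> {\<one>\<^bsub>H\<^esub>}"
  shows "(torsion_free H \<longrightarrow>
           (locally_sectionable G H f \<longleftrightarrow> f ` carrier G = carrier H))
       \<and> (torsion_group H \<longrightarrow>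
           (locally_sectionable G H f \<longleftrightarrow>
              (\<forall>b\<in>carrier H. \<exists>a\<in>carrier G. f a = b \<and> group.ord G a = group.ord H b)))"
proof -
  interpret group_hom G H f
    using assms by (simp add: group_hom_def group_hom_axioms_def)
  show ?thesis
    using locally_sectionable_iff_order_preserving_lifts
      order_preserving_lifts_iff_surj_if_torsion_free by simp
qed

end
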